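(* Let $N \ge 1$ agents $[N]=\{1,\dots,N\}$ be given with a distance function $\mathrm{dist}$ as in the context, let $n=\sum_{i=1}^N n_i$, and partition $n\times n$ matrices into $N\times N$ blocks accordingly. Fix $i\in[N]$. Let $L\in\mathbb{R}^{n\times n}$ be $(\tau,\rho)$-stable (with $\tau\ge 1$, $\rho>0$) and $(c_L,\gamma)$-SED with $c_L\ge 1$, $\gamma>0$, and let $M\in\mathbb{R}^{n\times n}$ be $(c_M,\gamma)$-SED away from $i$. Then the (unique) solution $P$ of the Lyapunov equation $P = L^\top P L + M$ is $(c_P,\gamma_P)$-SED away from $i$, where $$c_P = \frac{\|M\|\,\tau^2}{1-e^{-2\rho}} + 2c_M,\qquad \gamma_P = \frac{\rho\,\gamma}{\rho+\ln(N c_L)}.$$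
   Context: $\|\cdot\|$ denotes the Euclidean norm of vectors and the induced $\ell_2$ operator norm of matrices. There are $N$ agents $[N]=\{1,\dots,N\}$ embedded on an undirected graph; $\mathrm{dist}:[N]\times[N]\to\mathbb{R}_{\ge0}$ is the graph (shortest-path) distance, so $\mathrm{dist}(i,i)=0$, $\mathrm{dist}(i,j)=\mathrm{dist}(j,i)$, and $\mathrm{dist}(i,j)\le \mathrm{dist}(i,k)+\mathrm{dist}(k,j)$. Agent $i$ has dimensions $n_i$ (and $m_i$); a matrix $X\in\mathbb{R}^{\sum_i n_i\times\sum_i m_i}$ is partitioned into blocks $[X]_{lj}\in\mathbb{R}^{n_l\times m_j}$. Definition ($(\tau,\rho)$-stability): for $\tau\ge1,\rho>0$, a square matrix $X$ is $(\tau,\rho)$-stable if $\|X^k\|\le \tau e^{-\rho k}$ for all integers $k\ge0$. Definition (SED): the block matrix $X$ is $(c,\gamma)$-SED if $\|[X]_{lj}\|\le c\,e^{-\gamma\,\mathrm{dist}(l,j)}$ for all $l,j\in[N]$. Definition (SED away from $i$): for $i\in[N]$, the block matrix $X$ is $(c,\gamma)$-SED away from $i$ if $\|[X]_{lj}\|\le c\,e^{-\gamma\max(\mathrm{dist}(i,l),\mathrm{dist}(i,j))}$ for all $l,j\in[N]$. *)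

theory Defs
  imports "HOL-Analysis.Analysis"
begin

text \<open>Matrices are real n x n matrices indexed by a finite type 'n (n = CARD('n) = sum of n_i).
  The coordinate-to-agent assignment ag :: 'n => nat encodes the block partition:
  coordinate r belongs to agent ag r in {1..N}.\<close>

definition opnorm :: "real^'n^'m \<Rightarrow> real" where
  "opnorm X = onorm (\<lambda>v. X *v v)"

fun mpow :: "real^'n^'n \<Rightarrow> nat \<Rightarrow> real^'n^'n" where
  "mpow X 0 = mat 1"
| "mpow X (Suc k) = X ** mpow X k"

text \<open>Block (l,j) of X, zero-padded (zero padding does not change the operator norm).\<close>
definition blk :: "('n \<Rightarrow> nat) \<Rightarrow> real^'n^'n \<Rightarrow> nat \<Rightarrow> nat \<Rightarrow> real^'n^'n" where
  "blk ag X l j = (\<chi> r c. if ag r = l \<and> ag c = j then X $ r $ c else 0)"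

definition blknorm :: "('n \<Rightarrow> nat) \<Rightarrow> real^'n^'n \<Rightarrow> nat \<Rightarrow> nat \<Rightarrow> real" where
  "blknorm ag X l j = opnorm (blk ag X l j)"

definition walk :: "(nat \<Rightarrow> nat \<Rightarrow> bool) \<Rightarrow> nat \<Rightarrow> nat \<Rightarrow> nat \<Rightarrow> bool" where
  "walk E k a b = (\<exists>p::nat \<Rightarrow> nat. p 0 = a \<and> p k = b \<and> (\<forall>m<k. E (p m) (p (Suc m))))"

definition gdist :: "(nat \<Rightarrow> nat \<Rightarrow> bool) \<Rightarrow> nat \<Rightarrow> nat \<Rightarrow> real" where
  "gdist E a b = real (LEAST k. walk E k a b)"

definition conn_ugraph :: "nat \<Rightarrow> (nat \<Rightarrow> nat \<Rightarrow> bool) \<Rightarrow> bool" where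
  "conn_ugraph N E = ((\<forall>u v. E u v \<longrightarrow> u \<in> {1..N} \<and> v \<in> {1..N} \<and> E v u)
      \<and> (\<forall>a\<in>{1..N}. \<forall>b\<in>{1..N}. \<exists>k. walk E k a b))"

definition stable :: "real \<Rightarrow> real \<Rightarrow> real^'n^'n \<Rightarrow> bool" where
  "stable \<tau> \<rho> X = (\<forall>k::nat. opnorm (mpow X k) \<le> \<tau> * exp (- \<rho> * real k))"

definition SED :: "nat \<Rightarrow> (nat \<Rightarrow> nat \<Rightarrow> bool) \<Rightarrow> ('n \<Rightarrow> nat) \<Rightarrow> real \<Rightarrow> real \<Rightarrow> real^'n^'n \<Rightarrow> bool" where
  "SED N E ag c \<gamma> X = (\<forall>l\<in>{1..N}. \<forall>j\<in>{1..N}.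
      blknorm ag X l j \<le> c * exp (- \<gamma> * gdist E l j))"

definition SED_away :: "nat \<Rightarrow> (nat \<Rightarrow> nat \<Rightarrow> bool) \<Rightarrow> ('n \<Rightarrow> nat) \<Rightarrow> nat \<Rightarrow> real \<Rightarrow> real \<Rightarrow> real^'n^'n \<Rightarrow> bool" where
  "SED_away N E ag i c \<gamma> X = (\<forall>l\<in>{1..N}. \<forall>j\<in>{1..N}.
      blknorm ag X l j \<le> c * exp (- \<gamma> * max (gdist E i l) (gdist E i j)))"

end

theory Submission
  imports Defs
begin

text \<open>
  Iterating the equation gives P = \<Sum>_k (L^T)^k M L^k, and the (l,j) block of the k-th
  term has two bounds. Stability bounds it by \<tau>^2 e^(-2\<rho>k) \<parallel>M\<parallel>, which decays in k.
  On the other hand L^k is SED with constant c_L^k N^(k-1), and the triangle inequality for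
  the graph distance bounds the block by (N c_L)^(2k) c_M e^(-\<gamma>D) with
  D = max (dist(i,l), dist(i,j)), which grows in k. Using the second bound for
  k \<le> K \<approx> \<gamma>D / (2(\<rho> + ln (N c_L))) and the first beyond, both geometric sums are of
  order e^(-\<gamma>_P D).
\<close>

section \<open>Operator norm\<close>

lemma opnorm_nonneg: "0 \<le> opnorm (X::real^'n^'m)"
  unfolding opnorm_def by (simp add: onorm_pos_le)

lemma norm_matrix_vector_mult_le: "norm (X *v v) \<le> opnorm (X::real^'n^'m) * norm v"
  unfolding opnorm_def by (rule onorm) simp

lemma opnorm_le:
  assumes "\<And>v. norm (X *v v) \<le> b * norm v"
  shows "opnorm (X::real^'n^'m) \<le> b"
  unfolding opnorm_def using assms by (rule onorm_le)

lemma opnorm_zero [simp]: "opnorm (0::real^'n^'m) = 0"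
  using onorm_zero unfolding opnorm_def matrix_vector_mult_0 .

lemma opnorm_mult_le: "opnorm ((A::real^'n^'m) ** (B::real^'k^'n)) \<le> opnorm A * opnorm B"
proof -
  have "(\<lambda>v. (A ** B) *v v) = (*v) A \<circ> (*v) B"
    by (simp add: fun_eq_iff matrix_vector_mul_assoc)
  then show ?thesis
    unfolding opnorm_def by (simp add: onorm_compose)
qed

lemma opnorm_add_le: "opnorm ((A::real^'n^'m) + B) \<le> opnorm A + opnorm B"
  unfolding opnorm_def matrix_vector_mult_add_rdistrib by (simp add: onorm_triangle)

lemma opnorm_sum_le:
  "finite S \<Longrightarrow> opnorm (\<Sum>k\<in>S. (f k::real^'n^'m)) \<le> (\<Sum>k\<in>S. opnorm (f k))"
  by (induction S rule: finite_induct) (auto intro: order_trans[OF opnorm_add_le])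

lemma opnorm_transpose_le: "opnorm (transpose (A::real^'n^'m)) \<le> opnorm A"
proof (rule opnorm_le)
  fix v :: "real^'m"
  let ?w = "transpose A *v v"
  have "norm ?w ^ 2 = (A *v ?w) \<bullet> v"
    by (simp add: power2_norm_eq_inner dot_lmul_matrix[symmetric] inner_commute)
  also have "\<dots> \<le> norm (A *v ?w) * norm v"
    by (rule Cauchy_Schwarz_ineq2[THEN order_trans[OF abs_ge_self]])
  also have "\<dots> \<le> opnorm A * norm ?w * norm v"
    by (intro mult_right_mono norm_matrix_vector_mult_le) simp
  finally have "norm ?w * norm ?w \<le> norm ?w * (opnorm A * norm v)"
    by (simp add: power2_eq_square algebra_simps)
  then show "norm ?w \<le> opnorm A * norm v"
    using opnorm_nonneg[of A] by (cases "norm ?w = 0") (simp_all add: mult_le_cancel_left)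
qed

lemma opnorm_transpose: "opnorm (transpose (A::real^'n^'m)) = opnorm A"
  using opnorm_transpose_le[of A] opnorm_transpose_le[of "transpose A"] by simp

lemma blknorm_nonneg: "0 \<le> blknorm ag X l j"
  by (simp add: blknorm_def opnorm_nonneg)

lemma blknorm_le_opnorm: "blknorm (ag::'a::finite \<Rightarrow> nat) X l j \<le> opnorm X"
  unfolding blknorm_def
proof (rule opnorm_le)
  fix v :: "real^'a"
  let ?u = "(\<chi> c. if ag c = j then v$c else 0) :: real^'a"
  have "blk ag X l j *v v = (\<chi> r. if ag r = l then (X *v ?u)$r else 0)"
    by (auto simp add: blk_def vec_eq_iff matrix_vector_mult_def intro!: sum.cong)
  then have "norm (blk ag X l j *v v) \<le> norm (X *v ?u)"
    by (simp only:) (rule norm_le_componentwise_cart, simp)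
  also have "\<dots> \<le> opnorm X * norm ?u"
    by (rule norm_matrix_vector_mult_le)
  also have "\<dots> \<le> opnorm X * norm v"
    by (intro mult_left_mono opnorm_nonneg) (rule norm_le_componentwise_cart, simp)
  finally show "norm (blk ag X l j *v v) \<le> opnorm X * norm v" .
qed

lemma blk_add: "blk ag (X + Y) l j = blk ag X l j + blk ag Y l j"
  by (simp add: blk_def vec_eq_iff)

lemma blk_sum: "finite S \<Longrightarrow> blk ag (\<Sum>k\<in>S. f k) l j = (\<Sum>k\<in>S. blk ag (f k) l j)"
  by (induction S rule: finite_induct) (simp_all add: blk_add, simp add: blk_def vec_eq_iff)

lemma blknorm_transpose: "blknorm ag (transpose X) l j = blknorm ag X j l"
proof -
  have "blk ag (transpose X) l j = transpose (blk ag X j l)"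
    by (simp add: blk_def vec_eq_iff transpose_def)
  then show ?thesis
    by (simp add: blknorm_def opnorm_transpose)
qed

lemma blk_mult:
  assumes "\<forall>r. ag r \<in> A" "finite A"
  shows "blk ag (X ** Y) l j = (\<Sum>a\<in>A. blk ag X l a ** blk ag Y a j)"
proof -
  have "(X ** Y)$r$c = (\<Sum>a\<in>A. \<Sum>s\<in>UNIV. if ag s = a then X$r$s * Y$s$c else 0)" for r c
  proof -
    have "(\<Sum>a\<in>A. \<Sum>s\<in>UNIV. if ag s = a then X$r$s * Y$s$c else 0)
        = (\<Sum>s\<in>UNIV. \<Sum>a\<in>A. if ag s = a then X$r$s * Y$s$c else 0)"
      by (rule sum.swap)
    also have "\<dots> = (X ** Y)$r$c"
      using assms by (simp add: matrix_matrix_mult_def)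
    finally show ?thesis ..
  qed
  then show ?thesis
    by (auto simp: vec_eq_iff blk_def matrix_matrix_mult_def intro!: sum.cong)
qed

lemma blknorm_mult_le:
  assumes "\<forall>r. ag r \<in> A" "finite A"
  shows "blknorm ag (X ** Y) l j \<le> (\<Sum>a\<in>A. blknorm ag X l a * blknorm ag Y a j)"
  unfolding blknorm_def blk_mult[OF assms]
  using assms(2) by (rule order_trans[OF opnorm_sum_le]) (intro sum_mono opnorm_mult_le)

section \<open>Graph distance\<close>

lemma walk_refl: "walk E 0 a a"
  unfolding walk_def by (rule exI[of _ "\<lambda>_. a"]) simp

lemma walk_append:
  assumes "walk E k1 a c" "walk E k2 c b"
  shows "walk E (k1 + k2) a b"
proof -
  obtain p where p: "p 0 = a" "p k1 = c" "\<forall>m<k1. E (p m) (p (Suc m))"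
    using assms(1) walk_def by metis
  obtain q where q: "q 0 = c" "q k2 = b" "\<forall>m<k2. E (q m) (q (Suc m))"
    using assms(2) walk_def by metis
  define r where "r m = (if m \<le> k1 then p m else q (m - k1))" for m
  have "E (r m) (r (Suc m))" if "m < k1 + k2" for m
  proof (cases "m < k1")
    case False
    then have "Suc m - k1 = Suc (m - k1)" by simp
    then show ?thesis using False that p q by (auto simp: r_def)
  qed (use p in \<open>auto simp: r_def\<close>)
  moreover have "r 0 = a" "r (k1 + k2) = b"
    using p q by (auto simp: r_def)
  ultimately show ?thesis
    unfolding walk_def by blast
qed

lemma gdist_le: "walk E k a b \<Longrightarrow> gdist E a b \<le> real k"
  unfolding gdist_def by (simp add: Least_le)

lemma gdist_self [simp]: "gdist E a a = 0"
  using gdist_le[OF walk_refl, of E a] unfolding gdist_def by simp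

lemma gdist_nonneg: "0 \<le> gdist E a b"
  unfolding gdist_def by simp

lemma gdist_triangle:
  assumes "conn_ugraph N E" "a \<in> {1..N}" "b \<in> {1..N}" "c \<in> {1..N}"
  shows "gdist E a b \<le> gdist E a c + gdist E c b"
proof -
  have "walk E (LEAST k. walk E k u v) u v" if "u \<in> {1..N}" "v \<in> {1..N}" for u v
  proof (rule LeastI_ex)
    show "\<exists>k. walk E k u v"
      using assms(1) that by (simp add: conn_ugraph_def)
  qed
  from gdist_le[OF walk_append[OF this[OF assms(2,4)] this[OF assms(4,3)]]] show ?thesis
    by (simp add: gdist_def)
qed

lemma max_gdist_le:
  assumes "conn_ugraph N E" "i \<in> {1..N}" "l \<in> {1..N}" "j \<in> {1..N}" "a \<in> {1..N}" "b \<in> {1..N}"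
  shows "max (gdist E i l) (gdist E i j) \<le> gdist E a l + max (gdist E i a) (gdist E i b) + gdist E b j"
  using gdist_triangle[OF assms(1,2,3,5)] gdist_triangle[OF assms(1,2,4,6)]
    gdist_nonneg[of E a l] gdist_nonneg[of E b j]
  by linarith

lemma sum_power_le_twice_last:
  fixes y :: real
  assumes "2 \<le> y \<or> K = 0"
  shows "(\<Sum>k\<le>K. y^k) \<le> 2 * y^K"
proof (cases "K = 0")
  case False
  then have "2 \<le> y"
    using assms by simp
  then show ?thesis
  proof (induction K)
    case (Suc K)
    have "2 * y^K \<le> y * y^K"
      using Suc.prems by (intro mult_right_mono) simp_all
    moreover have "(\<Sum>k\<le>Suc K. y^k) = (\<Sum>k\<le>K. y^k) + y * y^K" "y^Suc K = y * y^K"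
      by simp_all
    ultimately show ?case
      using Suc.IH[OF Suc.prems] by linarith
  qed simp
qed simp

lemma sum_geometric_tail_le:
  fixes q :: real
  assumes "0 \<le> q" "q < 1"
  shows "(\<Sum>k\<in>{m..<n}. q^k) \<le> q^m / (1 - q)"
proof -
  have "(\<Sum>k\<in>{m..<n}. q^k) = q^m * (\<Sum>k<n-m. q^k)"
    by (simp add: sum.atLeastLessThan_shift_0[of _ m n] atLeast0LessThan power_add sum_distrib_left mult.commute)
  also have "(\<Sum>k<n-m. q^k) = (1 - q^(n-m)) / (1 - q)"
    using assms by (simp add: sum_gp_strict)
  also have "\<dots> \<le> 1 / (1 - q)"
    using assms by (intro divide_right_mono) simp_all
  finally show ?thesis
    using assms by (simp add: mult_left_mono)
qed

lemma le_of_forall_le_add_geometric: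
  fixes b B C q :: real
  assumes "\<And>K. b \<le> B + C * q^K" "0 \<le> q" "q < 1"
  shows "b \<le> B"
proof (rule LIMSEQ_le_const)
  show "(\<lambda>K. B + C * q^K) \<longlonglongrightarrow> B"
    using assms(2,3) by (auto intro!: tendsto_eq_intros LIMSEQ_power_zero)
qed (use assms(1) in blast)

section \<open>The Lyapunov equation\<close>

lemma linear_matrix_sandwich: "linear (\<lambda>X::real^'n^'m. A ** X ** B)"
  by (rule linearI)
    (simp_all add: vec_eq_iff matrix_matrix_mult_def sum.distrib sum_distrib_left algebra_simps)

lemma opnorm_mpow_le:
  assumes "stable \<tau> \<rho> L"
  shows "opnorm (mpow L k) \<le> \<tau> * exp (-\<rho>) ^ k"
proof -
  have "exp (- \<rho> * real k) = exp (-\<rho>) ^ k"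
    by (simp add: exp_of_nat_mult[symmetric] mult.commute)
  then show ?thesis
    using assms unfolding stable_def by metis
qed

lemma opnorm_mpow_sandwich_le:
  assumes "stable \<tau> \<rho> L"
  shows "opnorm (transpose (mpow L k) ** X ** mpow L k) \<le> \<tau>^2 * exp (-2*\<rho>) ^ k * opnorm X"
proof -
  have "opnorm (transpose (mpow L k) ** X ** mpow L k) \<le> opnorm (transpose (mpow L k) ** X) * opnorm (mpow L k)"
    by (rule opnorm_mult_le)
  also have "\<dots> \<le> opnorm (mpow L k) * opnorm X * opnorm (mpow L k)"
    by (intro mult_right_mono opnorm_nonneg) (metis opnorm_mult_le opnorm_transpose)
  also have "\<dots> = opnorm (mpow L k)^2 * opnorm X"
    by (simp add: power2_eq_square)
  also have "\<dots> \<le> (\<tau> * exp (-\<rho>) ^ k)^2 * opnorm X"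
    by (intro mult_right_mono power_mono opnorm_mpow_le[OF assms] opnorm_nonneg)
  also have "(\<tau> * exp (-\<rho>) ^ k)^2 = \<tau>^2 * exp (-2*\<rho>) ^ k"
    by (simp add: power_mult_distrib power_mult[symmetric] mult.commute exp_of_nat_mult[symmetric])
  finally show ?thesis .
qed

lemma lyapunov_expansion:
  assumes "P = transpose L ** P ** L + M"
  shows "P = (\<Sum>k<K. transpose (mpow L k) ** M ** mpow L k)
             + transpose (mpow L K) ** P ** mpow L K"
proof (induction K)
  case (Suc K)
  have "transpose (mpow L K) ** P ** mpow L K
      = transpose (mpow L K) ** (transpose L ** P ** L) ** mpow L K
        + transpose (mpow L K) ** M ** mpow L K"
    using linear_add[OF linear_matrix_sandwich] assms by metis
  also have "transpose (mpow L K) ** (transpose L ** P ** L) ** mpow L K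
      = transpose (mpow L (Suc K)) ** P ** mpow L (Suc K)"
    by (simp add: matrix_transpose_mul matrix_mul_assoc)
  finally show ?case
    using Suc.IH by (simp add: algebra_simps)
qed simp

lemma lyapunov_homogeneous_eq_0:
  assumes "stable \<tau> \<rho> L" "\<rho> > 0" "D = transpose L ** D ** L"
  shows "D = 0"
proof -
  have "opnorm D \<le> 0 + \<tau>^2 * opnorm D * exp (-2*\<rho>) ^ K" for K
    using lyapunov_expansion[of D L 0 K] assms(3) opnorm_mpow_sandwich_le[OF assms(1), of K D]
    by (simp add: mult_ac)
  then have "opnorm D \<le> 0"
    by (rule le_of_forall_le_add_geometric) (use assms(2) in simp_all)
  then have "(\<lambda>v. D *v v) = (\<lambda>v. 0)"
    using onorm_eq_0[of "(*v) D"] opnorm_nonneg[of D] by (simp add: opnorm_def)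
  then show "D = 0"
    by (simp add: matrix_eq fun_eq_iff)
qed

lemma lyapunov_unique_solution:
  fixes L M :: "real^'n^'n"
  assumes "stable \<tau> \<rho> L" "\<rho> > 0"
  shows "\<exists>!P. P = transpose L ** P ** L + M"
proof -
  define f where "f P = P - transpose L ** P ** L" for P :: "real^'n^'n"
  have "linear f"
    unfolding f_def by (intro linear_compose_sub linear_ident linear_matrix_sandwich)
  moreover have "inj f"
    unfolding linear_injective_0[OF \<open>linear f\<close>]
    using lyapunov_homogeneous_eq_0[OF assms] by (simp add: f_def)
  ultimately have "bij f"
    by (simp add: bij_def linear_injective_imp_surjective)
  then have "\<exists>!P. f P = M"
    by (simp add: bij_iff)
  then show ?thesis
    by (simp add: f_def diff_eq_eq add.commute)
qed

lemma blknorm_lyapunov_solution_le: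
  assumes "stable \<tau> \<rho> L" "\<rho> > 0" "P = transpose L ** P ** L + M"
    and partial_sums: "\<And>K. (\<Sum>k<K. blknorm ag (transpose (mpow L k) ** M ** mpow L k) l j) \<le> B"
  shows "blknorm ag P l j \<le> B"
proof (rule le_of_forall_le_add_geometric)
  fix K
  let ?S = "\<Sum>k<K. blk ag (transpose (mpow L k) ** M ** mpow L k) l j"
    and ?R = "transpose (mpow L K) ** P ** mpow L K"
  have "blk ag P l j = ?S + blk ag ?R l j"
    using arg_cong[where f="\<lambda>X. blk ag X l j", OF lyapunov_expansion[OF assms(3), of K]]
    by (simp add: blk_add blk_sum)
  then have "blknorm ag P l j \<le> opnorm ?S + blknorm ag ?R l j"
    unfolding blknorm_def by (simp add: opnorm_add_le)
  also have "\<dots> \<le> B + opnorm ?R"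
    using order_trans[OF opnorm_sum_le[OF finite_lessThan] partial_sums[unfolded blknorm_def]]
    by (intro add_mono blknorm_le_opnorm)
  also have "\<dots> \<le> B + \<tau>^2 * opnorm P * exp (-2*\<rho>)^K"
    using opnorm_mpow_sandwich_le[OF assms(1), of K P] by (simp add: mult_ac)
  finally show "blknorm ag P l j \<le> B + \<tau>^2 * opnorm P * exp (-2*\<rho>)^K" .
qed (use assms(2) in simp_all)

section \<open>Spatial decay of the series terms\<close>

lemma SED_away_const_nonneg:
  assumes "SED_away N E ag i c \<gamma> X" "i \<in> {1..N}"
  shows "c \<ge> 0"
  using order_trans[OF blknorm_nonneg] assms unfolding SED_away_def
  by (metis zero_le_mult_iff exp_gt_zero not_le)

lemma SED_mpow:
  assumes "conn_ugraph N E" "\<forall>r. ag r \<in> {1..N}"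
    and L: "SED N E ag cL \<gamma> L" and "cL \<ge> 0" "\<gamma> \<ge> 0"
  shows "SED N E ag (cL^Suc m * real N^m) \<gamma> (mpow L (Suc m))"
proof (induction m)
  case 0
  show ?case
    using L by simp
next
  case (Suc m)
  let ?C = "cL^Suc m * real N^m"
  show ?case
    unfolding SED_def
  proof (intro ballI)
    fix a b assume ab: "a \<in> {1..N}" "b \<in> {1..N}"
    have "blknorm ag (mpow L (Suc (Suc m))) a b
        \<le> (\<Sum>c\<in>{1..N}. blknorm ag L a c * blknorm ag (mpow L (Suc m)) c b)"
      unfolding mpow.simps(2)[of L "Suc m"] using assms(2) by (rule blknorm_mult_le) simp
    also have "\<dots> \<le> (\<Sum>c\<in>{1..N}. cL * ?C * exp (-\<gamma> * gdist E a b))"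
    proof (rule sum_mono)
      fix c assume c: "c \<in> {1..N}"
      have "blknorm ag L a c * blknorm ag (mpow L (Suc m)) c b
          \<le> (cL * exp (-\<gamma> * gdist E a c)) * (?C * exp (-\<gamma> * gdist E c b))"
        using L Suc.IH ab c assms(4) by (intro mult_mono blknorm_nonneg) (auto simp: SED_def)
      also have "\<dots> = cL * ?C * exp (-\<gamma> * (gdist E a c + gdist E c b))"
        by (simp add: exp_add[symmetric] algebra_simps)
      also have "\<dots> \<le> cL * ?C * exp (-\<gamma> * gdist E a b)"
        using gdist_triangle[OF assms(1) ab c] assms(4,5)
        by (intro mult_left_mono) (simp_all add: mult_left_mono)
      finally show "blknorm ag L a c * blknorm ag (mpow L (Suc m)) c b
          \<le> cL * ?C * exp (-\<gamma> * gdist E a b)" .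
    qed
    also have "\<dots> = cL^Suc (Suc m) * real N^Suc m * exp (-\<gamma> * gdist E a b)"
      by simp
    finally show "blknorm ag (mpow L (Suc (Suc m))) a b
        \<le> cL^Suc (Suc m) * real N^Suc m * exp (-\<gamma> * gdist E a b)" .
  qed
qed

lemma SED_away_mpow_sandwich:
  assumes conn: "conn_ugraph N E" and ag: "\<forall>r. ag r \<in> {1..N}" and i: "i \<in> {1..N}"
    and L: "SED N E ag cL \<gamma> L" and "cL \<ge> 0" "\<gamma> \<ge> 0"
    and M: "SED_away N E ag i cM \<gamma> M"
  shows "SED_away N E ag i ((real N * cL)^(2*k) * cM) \<gamma> (transpose (mpow L k) ** M ** mpow L k)"
proof (cases k)
  case 0
  then show ?thesis
    using M by simp
next
  case (Suc m)
  let ?Lk = "mpow L k" and ?C = "cL^Suc m * real N^m"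
  have Lk: "SED N E ag ?C \<gamma> ?Lk"
    using SED_mpow[OF conn ag L assms(5,6)] Suc by simp
  have "?C \<ge> 0" "cM \<ge> 0"
    using assms(5) SED_away_const_nonneg[OF M i] by simp_all
  show ?thesis
    unfolding SED_away_def
  proof (intro ballI)
    fix l j assume lj: "l \<in> {1..N}" "j \<in> {1..N}"
    let ?e = "exp (-\<gamma> * max (gdist E i l) (gdist E i j))"
    have "blknorm ag (transpose ?Lk ** M ** ?Lk) l j
        \<le> (\<Sum>b\<in>{1..N}. blknorm ag (transpose ?Lk ** M) l b * blknorm ag ?Lk b j)"
      using ag by (rule blknorm_mult_le) simp
    also have "\<dots> \<le> (\<Sum>b\<in>{1..N}. (\<Sum>a\<in>{1..N}. blknorm ag ?Lk a l * blknorm ag M a b) * blknorm ag ?Lk b j)"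
      using blknorm_mult_le[OF ag, of "transpose ?Lk" M l] 
      by (intro sum_mono mult_right_mono blknorm_nonneg) (simp add: blknorm_transpose)
    also have "\<dots> = (\<Sum>b\<in>{1..N}. \<Sum>a\<in>{1..N}. blknorm ag ?Lk a l * blknorm ag M a b * blknorm ag ?Lk b j)"
      by (simp add: sum_distrib_right)
    also have "\<dots> \<le> (\<Sum>b\<in>{1..N}. \<Sum>a\<in>{1..N}. ?C * cM * ?C * ?e)"
    proof (intro sum_mono)
      fix a b assume ab: "a \<in> {1..N}" "b \<in> {1..N}"
      let ?d = "gdist E a l + max (gdist E i a) (gdist E i b) + gdist E b j"
      have "blknorm ag ?Lk a l * blknorm ag M a b * blknorm ag ?Lk b j
          \<le> (?C * exp (-\<gamma> * gdist E a l)) * (cM * exp (-\<gamma> * max (gdist E i a) (gdist E i b)))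
            * (?C * exp (-\<gamma> * gdist E b j))"
        using Lk M ab lj assms(5) \<open>cM \<ge> 0\<close>
        by (intro mult_mono blknorm_nonneg mult_nonneg_nonneg) (auto simp: SED_def SED_away_def)
      also have "\<dots> = ?C * cM * ?C * exp (-\<gamma> * ?d)"
        by (simp add: exp_add[symmetric] algebra_simps)
      also have "\<dots> \<le> ?C * cM * ?C * ?e"
        using max_gdist_le[OF conn i lj ab] assms(6) \<open>?C \<ge> 0\<close> \<open>cM \<ge> 0\<close>
        by (intro mult_left_mono) (simp_all add: mult_left_mono)
      finally show "blknorm ag ?Lk a l * blknorm ag M a b * blknorm ag ?Lk b j \<le> ?C * cM * ?C * ?e" .
    qed
    also have "\<dots> = (real N * cL)^(2*k) * cM * ?e"
      using Suc by (simp add: power_mult power2_eq_square algebra_simps)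
    finally show "blknorm ag (transpose ?Lk ** M ** ?Lk) l j \<le> (real N * cL)^(2*k) * cM * ?e" .
  qed
qed

section \<open>Balancing the two decay bounds\<close>

lemma exists_split_index:
  fixes \<gamma> \<rho> x D :: real
  assumes "\<gamma> \<ge> 0" "\<rho> > 0" "x \<ge> 1" "D \<ge> 0"
  defines "e \<equiv> exp (- (\<rho> * \<gamma> / (\<rho> + ln x)) * D)"
  obtains K where "x^(2*K) * exp (-\<gamma>*D) \<le> e" "exp (-2*\<rho>)^Suc K \<le> e" "D = 0 \<Longrightarrow> K = 0"
proof
  define a where "a = ln x"
  have "a \<ge> 0"
    using assms(3) by (simp add: a_def)
  then have "\<rho> + a > 0"
    using assms(2) by simp
  define s where "s = \<gamma> * D / (2 * (\<rho> + a))"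
  have "s \<ge> 0"
    using assms(1,4) \<open>\<rho> + a > 0\<close> by (simp add: s_def)
  define K where "K = nat \<lfloor>s\<rfloor>"
  have K: "real K \<le> s" "s < real K + 1"
    using \<open>s \<ge> 0\<close> by (simp_all add: K_def)
  have e: "e = exp (2 * s * a - \<gamma> * D)" "e = exp (- 2 * \<rho> * s)"
    using \<open>\<rho> + a > 0\<close> by (simp_all add: e_def s_def a_def[symmetric] field_simps)
  have "x^(2*K) = exp (2 * real K * a)"
    using assms(3) exp_of_nat_mult[of "2*K" a] by (simp add: a_def mult.commute)
  then have "x^(2*K) * exp (-\<gamma>*D) = exp (2 * real K * a - \<gamma> * D)"
    by (simp add: exp_add[symmetric])
  also have "\<dots> \<le> e"
    unfolding e(1) using K(1) \<open>a \<ge> 0\<close> by (simp add: mult_right_mono)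
  finally show "x^(2*K) * exp (-\<gamma>*D) \<le> e" .
  have "exp (-2*\<rho>)^Suc K = exp (- 2 * \<rho> * (real K + 1))"
    using exp_of_nat_mult[of "Suc K" "-2*\<rho>"] by (simp add: ac_simps)
  also have "\<dots> \<le> e"
    unfolding e(2) using K(2) assms(2) by simp
  finally show "exp (-2*\<rho>)^Suc K \<le> e" .
  show "D = 0 \<Longrightarrow> K = 0"
    by (simp add: K_def s_def)
qed

lemma sum_le_of_decay_bounds:
  fixes t :: "nat \<Rightarrow> real"
  assumes "\<gamma> \<ge> 0" "\<rho> > 0" "x \<ge> 1" "D \<ge> 0" "D > 0 \<Longrightarrow> x \<ge> 2"
    and t_nonneg: "\<And>k. 0 \<le> t k"
    and t_head: "\<And>k. t k \<le> x^(2*k) * c * exp (-\<gamma>*D)"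
    and t_tail: "\<And>k. t k \<le> A * exp (-2*\<rho>)^k"
  shows "(\<Sum>k<n. t k) \<le> (A / (1 - exp (-2*\<rho>)) + 2 * c) * exp (- (\<rho> * \<gamma> / (\<rho> + ln x)) * D)"
proof -
  define q where "q = exp (-2*\<rho>)"
  define e where "e = exp (- (\<rho> * \<gamma> / (\<rho> + ln x)) * D)"
  have q: "0 < q" "q < 1"
    using assms(2) by (simp_all add: q_def)
  have "A \<ge> 0" "c \<ge> 0"
    using order_trans[OF t_nonneg t_tail, of 0] order_trans[OF t_nonneg t_head, of 0]
    by (simp_all add: zero_le_mult_iff)
  obtain K where K: "x^(2*K) * exp (-\<gamma>*D) \<le> e" "q^Suc K \<le> e" "D = 0 \<Longrightarrow> K = 0"
    using exists_split_index[OF assms(1-4)] unfolding q_def e_def by blast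
  have head: "(\<Sum>k\<le>K. t k) \<le> 2 * c * e"
  proof -
    have "(\<Sum>k\<le>K. t k) \<le> (\<Sum>k\<le>K. (x^2)^k) * (c * exp (-\<gamma>*D))"
      unfolding sum_distrib_right using t_head by (intro sum_mono) (simp add: power_mult mult.assoc)
    also have "\<dots> \<le> 2 * (x^2)^K * (c * exp (-\<gamma>*D))"
    proof (intro mult_right_mono sum_power_le_twice_last)
      show "2 \<le> x^2 \<or> K = 0"
      proof (cases "D = 0")
        case False
        then have "2 * 1 \<le> x * x"
          using assms(4,5) by (intro mult_mono) simp_all
        then show ?thesis
          by (simp add: power2_eq_square)
      qed (use K(3) in simp)
    qed (use \<open>c \<ge> 0\<close> in simp)
    also have "\<dots> = 2 * c * (x^(2*K) * exp (-\<gamma>*D))"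
      by (simp add: power_mult)
    also have "\<dots> \<le> 2 * c * e"
      using K(1) \<open>c \<ge> 0\<close> by (intro mult_left_mono) simp_all
    finally show ?thesis .
  qed
  have tail: "(\<Sum>k\<in>{Suc K..<m}. t k) \<le> A / (1 - q) * e" for m
  proof -
    have "(\<Sum>k\<in>{Suc K..<m}. t k) \<le> A * (\<Sum>k\<in>{Suc K..<m}. q^k)"
      unfolding sum_distrib_left using t_tail by (intro sum_mono) (simp add: q_def)
    also have "\<dots> \<le> A * (q^Suc K / (1 - q))"
      using sum_geometric_tail_le[of q "Suc K" m] q \<open>A \<ge> 0\<close> by (intro mult_left_mono) simp_all
    also have "\<dots> \<le> A * (e / (1 - q))"
      using K(2) q \<open>A \<ge> 0\<close> by (intro mult_left_mono divide_right_mono) simp_all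
    finally show ?thesis
      by simp
  qed
  define m where "m = max n (Suc K)"
  have "(\<Sum>k<n. t k) \<le> (\<Sum>k<m. t k)"
    using t_nonneg by (intro sum_mono2) (auto simp: m_def)
  also have "\<dots> = (\<Sum>k\<le>K. t k) + (\<Sum>k\<in>{Suc K..<m}. t k)"
    using sum.atLeastLessThan_concat[of 0 "Suc K" m t]
    by (simp add: m_def atLeast0LessThan lessThan_Suc_atMost)
  also have "\<dots> \<le> 2 * c * e + A / (1 - q) * e"
    by (intro add_mono head tail)
  finally show ?thesis
    by (simp add: e_def q_def algebra_simps)
qed

theorem lemma1:
  fixes N :: nat and E :: "nat \<Rightarrow> nat \<Rightarrow> bool" and ag :: "'n::finite \<Rightarrow> nat"
    and i :: nat and L M :: "real^'n^'n" and \<tau> \<rho> cL cM \<gamma> :: real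
  assumes "N \<ge> 1"
    and "conn_ugraph N E"
    and "\<forall>r. ag r \<in> {1..N}"
    and "i \<in> {1..N}"
    and "\<tau> \<ge> 1" and "\<rho> > 0"
    and "stable \<tau> \<rho> L"
    and "cL \<ge> 1" and "\<gamma> > 0"
    and "SED N E ag cL \<gamma> L"
    and "SED_away N E ag i cM \<gamma> M"
  shows "(\<exists>!P. P = transpose L ** P ** L + M) \<and>
    (\<forall>P. P = transpose L ** P ** L + M \<longrightarrow>
       SED_away N E ag i
         (opnorm M * \<tau>^2 / (1 - exp (-2 * \<rho>)) + 2 * cM)
         (\<rho> * \<gamma> / (\<rho> + ln (real N * cL))) P)"
proof (intro conjI allI impI)
  show "\<exists>!P. P = transpose L ** P ** L + M"
    using assms(7,6) by (rule lyapunov_unique_solution)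
  fix P assume P: "P = transpose L ** P ** L + M"
  have x_ge_1: "1 * 1 \<le> real N * cL"
    using assms(1,8) by (intro mult_mono) simp_all
  show "SED_away N E ag i (opnorm M * \<tau>^2 / (1 - exp (-2 * \<rho>)) + 2 * cM)
      (\<rho> * \<gamma> / (\<rho> + ln (real N * cL))) P"
    unfolding SED_away_def
  proof (intro ballI)
    fix l j assume lj: "l \<in> {1..N}" "j \<in> {1..N}"
    define D where "D = max (gdist E i l) (gdist E i j)"
    have "2 * 1 \<le> real N * cL" if "D > 0"
    proof -
      have "l \<noteq> i \<or> j \<noteq> i"
        using that by (auto simp: D_def)
      then have "real N \<ge> 2"
        using assms(4) lj by auto
      then show ?thesis
        using assms(8) by (intro mult_mono) simp_all
    qed
    then show "blknorm ag P l j \<le> (opnorm M * \<tau>^2 / (1 - exp (-2 * \<rho>)) + 2 * cM)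
        * exp (- (\<rho> * \<gamma> / (\<rho> + ln (real N * cL))) * D)"
      using SED_away_mpow_sandwich[OF assms(2,3,4,10) _ _ assms(11)] assms(6,8,9) lj x_ge_1
        order_trans[OF blknorm_le_opnorm opnorm_mpow_sandwich_le[OF assms(7)]]
      by (intro blknorm_lyapunov_solution_le[OF assms(7,6) P] sum_le_of_decay_bounds)
        (auto simp: D_def gdist_nonneg blknorm_nonneg SED_away_def le_max_iff_disj mult_ac)
  qed
qed

end
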